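(* Let $D$ be a digraph with $n\ge 2$ vertices and $a$ arcs, and let $\alpha\in[0,1)$. Let $\sigma_{1\alpha}(D)$ be the largest singular value of $A_\alpha(D)$. Then $$\sigma_{1\alpha}(D)\ge \frac{a}{n},$$ with equality if and only if $D$ is $\frac{a}{n}$-regular, i.e. every vertex of $D$ has outdegree $\frac an$ and indegree $\frac an$.
   Context: Digraphs are simple: a finite vertex set and a set of arcs, which are ordered pairs of distinct vertices, with no parallel arcs. For a digraph $D$ on vertices $v_1,\dots,v_n$, the adjacency matrix $A(D)=(a_{ij})$ has $a_{ij}=1$ if $(v_i,v_j)$ is an arc and $0$ otherwise; $d_i^+$ is the outdegree of $v_i$, and $\Delta^+(D)=\mathrm{diag}(d_1^+,\dots,d_n^+)$. For $\alpha\in[0,1)$, $A_\alpha(D)=\alpha\Delta^+(D)+(1-\alpha)A(D)$. The singular values of a real square matrix $B$ are the nonnegative square roots of the eigenvalues of $BB^{T}$, counted with multiplicity. *)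

theory Defs
  imports "Jordan_Normal_Form.Char_Poly"
begin

definition digraph :: "nat \<Rightarrow> (nat \<times> nat) set \<Rightarrow> bool" where
  "digraph n Arcs \<longleftrightarrow> Arcs \<subseteq> {0..<n} \<times> {0..<n} \<and> (\<forall>i. (i, i) \<notin> Arcs)"

definition outdeg :: "(nat \<times> nat) set \<Rightarrow> nat \<Rightarrow> nat" where
  "outdeg Arcs i = card {j. (i, j) \<in> Arcs}"

definition indeg :: "(nat \<times> nat) set \<Rightarrow> nat \<Rightarrow> nat" where
  "indeg Arcs j = card {i. (i, j) \<in> Arcs}"

definition adj_mat :: "nat \<Rightarrow> (nat \<times> nat) set \<Rightarrow> real mat" where
  "adj_mat n Arcs = mat n n (\<lambda>(i, j). if (i, j) \<in> Arcs then 1 else 0)"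

definition outdeg_mat :: "nat \<Rightarrow> (nat \<times> nat) set \<Rightarrow> real mat" where
  "outdeg_mat n Arcs = mat n n (\<lambda>(i, j). if i = j then real (outdeg Arcs i) else 0)"

definition A_alpha :: "real \<Rightarrow> nat \<Rightarrow> (nat \<times> nat) set \<Rightarrow> real mat" where
  "A_alpha \<alpha> n Arcs = \<alpha> \<cdot>\<^sub>m outdeg_mat n Arcs + (1 - \<alpha>) \<cdot>\<^sub>m adj_mat n Arcs"

definition largest_singular_value :: "real mat \<Rightarrow> real" where
  "largest_singular_value B = sqrt (Max {k. eigenvalue (B * B\<^sup>T) k})"

end

(*
  The square of the largest singular value of B is the largest eigenvalue l of the
  symmetric matrix B B^T, and l is the maximum of |B^T y|^2 over unit vectors y.
  The entries of B^T 1 are the column sums of B, whose total is the number a of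
  arcs, so testing y = 1 and the inequality between the arithmetic and the
  quadratic mean give l >= (a/n)^2, with equality only if all column sums are a/n.
  Testing the row-sum vector r gives |r|^4 <= n l |r|^2, which at equality forces
  all row sums to be a/n as well.  Conversely, if all row and column sums equal c
  and B is nonnegative, a weighted Cauchy-Schwarz inequality bounds |B^T x|^2 by
  c^2 for unit x.  For A_alpha(D) the row sums are the outdegrees and the column
  sums are alpha d+ + (1 - alpha) d-, and since alpha < 1 these are all equal to
  a/n exactly when D is a/n-regular.
*)
theory Submission
  imports "HOL-Analysis.Function_Topology" "HOL-Analysis.Convex" Defs
begin

section \<open>Rayleigh quotients of symmetric matrices\<close>

text \<open>Vectors of \<open>\<real>\<^sup>n\<close> are modelled as functions \<open>nat \<Rightarrow> real\<close>; only the
  coordinates below \<open>n\<close> matter.\<close>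

definition quad_form :: "nat \<Rightarrow> (nat \<Rightarrow> nat \<Rightarrow> real) \<Rightarrow> (nat \<Rightarrow> real) \<Rightarrow> real" where
  "quad_form n M y = (\<Sum>i<n. \<Sum>j<n. M i j * y i * y j)"

definition sum_squares :: "nat \<Rightarrow> (nat \<Rightarrow> real) \<Rightarrow> real" where
  "sum_squares n y = (\<Sum>i<n. (y i)\<^sup>2)"

lemma sum_squares_nonneg: "sum_squares n y \<ge> 0"
  unfolding sum_squares_def by (simp add: sum_nonneg)

lemma sum_squares_eq_0_iff: "sum_squares n y = 0 \<longleftrightarrow> (\<forall>i<n. y i = 0)"
  unfolding sum_squares_def by (subst sum_nonneg_eq_0_iff) auto

lemma quad_form_scale: "quad_form n M (\<lambda>i. c * y i) = c\<^sup>2 * quad_form n M y"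
  unfolding quad_form_def by (simp add: sum_distrib_left power2_eq_square mult_ac)

lemma sum_squares_scale: "sum_squares n (\<lambda>i. c * y i) = c\<^sup>2 * sum_squares n y"
  unfolding sum_squares_def by (simp add: sum_distrib_left power_mult_distrib)

lemma quad_form_cong: "(\<And>i. i < n \<Longrightarrow> y i = z i) \<Longrightarrow> quad_form n M y = quad_form n M z"
  unfolding quad_form_def by (intro sum.cong) auto

lemma sum_squares_cong: "(\<And>i. i < n \<Longrightarrow> y i = z i) \<Longrightarrow> sum_squares n y = sum_squares n z"
  unfolding sum_squares_def by (intro sum.cong) auto

text \<open>The unit sphere is compact as a closed subset of the Tychonoff cube of all
  \<open>[-1, 1]\<close>-valued functions.\<close>

lemma quad_form_attains_max_on_sphere:
  assumes "n > 0"
  obtains x where "sum_squares n x = 1"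
    and "\<And>y. sum_squares n y = 1 \<Longrightarrow> quad_form n M y \<le> quad_form n M x"
proof -
  define K where "K = (UNIV \<rightarrow>\<^sub>E {-1..1::real}) \<inter> {x. sum_squares n x = 1}"
  have "compactin (product_topology (\<lambda>i. euclidean) UNIV) (UNIV \<rightarrow>\<^sub>E {-1..1::real})"
    by (subst compactin_PiE) auto
  then have "compact (UNIV \<rightarrow>\<^sub>E {-1..1::real})"
    by (simp add: euclidean_product_topology)
  moreover have "closed {x. sum_squares n x = 1}"
    unfolding sum_squares_def
    by (intro closed_Collect_eq continuous_intros continuous_on_product_coordinates)
  ultimately have "compact K"
    unfolding K_def by (rule compact_Int_closed)
  have "(\<lambda>i. if i = 0 then 1 else 0) \<in> K"
    using assms by (auto simp: K_def sum_squares_def if_distrib[of "\<lambda>x. x\<^sup>2"] cong: if_cong)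
  moreover have "continuous_on UNIV (quad_form n M)"
    unfolding quad_form_def by (intro continuous_intros continuous_on_product_coordinates)
  ultimately obtain x where "x \<in> K" and x_max: "\<And>z. z \<in> K \<Longrightarrow> quad_form n M z \<le> quad_form n M x"
    using continuous_attains_sup[OF \<open>compact K\<close> _ continuous_on_subset] by blast
  show ?thesis
  proof
    show "sum_squares n x = 1"
      using \<open>x \<in> K\<close> by (simp add: K_def)
  next
    fix y assume y: "sum_squares n y = 1"
    define z where "z i = (if i < n then y i else 0)" for i
    have "(y i)\<^sup>2 \<le> sum_squares n y" if "i < n" for i
      unfolding sum_squares_def using that by (intro member_le_sum) auto
    then have "(y i)\<^sup>2 \<le> 1" if "i < n" for i
      using y that by simp
    then have "z \<in> K"
      using y sum_squares_cong[of n z y] by (auto simp: K_def z_def abs_le_iff power_le_one_iff abs_square_le_1)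
    then show "quad_form n M y \<le> quad_form n M x"
      using x_max quad_form_cong[of n y z M] by (simp add: z_def)
  qed
qed

lemma quad_form_le_of_sphere_bound:
  assumes "\<And>z. sum_squares n z = 1 \<Longrightarrow> quad_form n M z \<le> l"
  shows "quad_form n M y \<le> l * sum_squares n y"
proof (cases "sum_squares n y = 0")
  case True
  then have "quad_form n M y = quad_form n M (\<lambda>_. 0)"
    by (intro quad_form_cong) (simp add: sum_squares_eq_0_iff)
  then show ?thesis
    using True by (simp add: quad_form_def)
next
  case False
  then have pos: "sum_squares n y > 0"
    using sum_squares_nonneg[of n y] by linarith
  define c where "c = 1 / sqrt (sum_squares n y)"
  have c2: "c\<^sup>2 * sum_squares n y = 1"
    using pos by (simp add: c_def power_divide)
  then have "c\<^sup>2 * quad_form n M y \<le> l"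
    using assms[of "\<lambda>i. c * y i"] by (simp add: quad_form_scale sum_squares_scale)
  then have "c\<^sup>2 * quad_form n M y \<le> c\<^sup>2 * (l * sum_squares n y)"
    using c2 by (simp add: mult_ac)
  moreover have "c\<^sup>2 > 0"
    using pos by (simp add: c_def)
  ultimately show ?thesis
    by simp
qed

lemma quad_form_add_scaled:
  assumes sym: "\<And>i j. i < n \<Longrightarrow> j < n \<Longrightarrow> M i j = M j i"
  shows "quad_form n M (\<lambda>i. x i + t * y i)
    = quad_form n M x + 2 * t * (\<Sum>i<n. y i * (\<Sum>j<n. M i j * x j)) + t\<^sup>2 * quad_form n M y"
proof -
  have cross: "(\<Sum>i<n. \<Sum>j<n. M i j * x i * y j) = (\<Sum>i<n. y i * (\<Sum>j<n. M i j * x j))"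
  proof -
    have "(\<Sum>i<n. \<Sum>j<n. M i j * x i * y j) = (\<Sum>j<n. \<Sum>i<n. M j i * x i * y j)"
      using sym by (subst sum.swap) (intro sum.cong; simp)
    then show ?thesis
      by (simp add: sum_distrib_left mult_ac)
  qed
  have "quad_form n M (\<lambda>i. x i + t * y i) = quad_form n M x
      + t * (\<Sum>i<n. \<Sum>j<n. M i j * x i * y j) + t * (\<Sum>i<n. \<Sum>j<n. M i j * y i * x j)
      + t\<^sup>2 * quad_form n M y"
    unfolding quad_form_def
    by (simp add: sum.distrib sum_distrib_left algebra_simps power2_eq_square)
  also have "(\<Sum>i<n. \<Sum>j<n. M i j * y i * x j) = (\<Sum>i<n. y i * (\<Sum>j<n. M i j * x j))"
    by (simp add: sum_distrib_left mult_ac)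
  finally show ?thesis
    using cross by simp
qed

lemma linear_coeff_zero_if_nonneg:
  fixes b c :: real
  assumes "\<And>t. 0 \<le> b * t + c * t\<^sup>2"
  shows "b = 0"
proof (rule ccontr)
  assume "b \<noteq> 0"
  define t where "t = - b / (\<bar>c\<bar> + 1)"
  have t_scaled: "t * (\<bar>c\<bar> + 1) = - b"
    by (simp add: t_def)
  have "(b * t + c * t\<^sup>2) * (\<bar>c\<bar> + 1)\<^sup>2
      = b * (t * (\<bar>c\<bar> + 1)) * (\<bar>c\<bar> + 1) + c * (t * (\<bar>c\<bar> + 1))\<^sup>2"
    by (simp add: algebra_simps power2_eq_square)
  also have "\<dots> = b\<^sup>2 * (c - \<bar>c\<bar> - 1)"
    unfolding t_scaled by (simp add: algebra_simps power2_eq_square)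
  also have "\<dots> < 0"
    using \<open>b \<noteq> 0\<close> by (intro mult_pos_neg) auto
  finally have "(b * t + c * t\<^sup>2) * (\<bar>c\<bar> + 1)\<^sup>2 < 0" .
  moreover have "0 \<le> (b * t + c * t\<^sup>2) * (\<bar>c\<bar> + 1)\<^sup>2"
    using assms[of t] by simp
  ultimately show False
    by linarith
qed

lemma psd_quad_form_zero_imp_kernel:
  assumes sym: "\<And>i j. i < n \<Longrightarrow> j < n \<Longrightarrow> N i j = N j i"
    and psd: "\<And>y. quad_form n N y \<ge> 0" and "quad_form n N x = 0" and "i < n"
  shows "(\<Sum>j<n. N i j * x j) = 0"
proof -
  define g where "g i = (\<Sum>j<n. N i j * x j)" for i
  have "0 \<le> 2 * sum_squares n g * t + quad_form n N g * t\<^sup>2" for t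
    using psd[of "\<lambda>i. x i + t * g i"] quad_form_add_scaled[OF sym, where x = x and t = t and y = g] \<open>quad_form n N x = 0\<close>
    by (simp add: sum_squares_def g_def power2_eq_square mult_ac)
  then have "sum_squares n g = 0"
    using linear_coeff_zero_if_nonneg by fastforce
  then show ?thesis
    using \<open>i < n\<close> by (simp add: sum_squares_eq_0_iff g_def)
qed

lemma rayleigh_maximizer_eigenvector:
  assumes sym: "\<And>i j. i < n \<Longrightarrow> j < n \<Longrightarrow> M i j = M j i"
    and bound: "\<And>y. quad_form n M y \<le> l * sum_squares n y"
    and "sum_squares n x = 1" and "quad_form n M x = l" and "i < n"
  shows "(\<Sum>j<n. M i j * x j) = l * x i"
proof -
  \<comment> \<open>\<open>l I - M\<close> is positive semidefinite and its form vanishes at \<open>x\<close>.\<close>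
  define N where "N i j = l * of_bool (i = j) - M i j" for i j
  have quad_N: "quad_form n N y = l * sum_squares n y - quad_form n M y" for y
  proof -
    have "quad_form n N y = (\<Sum>i<n. \<Sum>j<n. of_bool (i = j) * (l * y i * y j)) - quad_form n M y"
      by (simp add: quad_form_def N_def algebra_simps sum_subtractf)
    also have "(\<Sum>i<n. \<Sum>j<n. of_bool (i = j) * (l * y i * y j)) = (\<Sum>i<n. l * (y i)\<^sup>2)"
    proof (intro sum.cong refl)
      fix i assume "i \<in> {..<n}"
      then have "{..<n} \<inter> {j. i = j} = {i}"
        by auto
      then show "(\<Sum>j<n. of_bool (i = j) * (l * y i * y j)) = l * (y i)\<^sup>2"
        by (simp add: power2_eq_square)
    qed
    also have "\<dots> = l * sum_squares n y"
      by (simp add: sum_squares_def sum_distrib_left)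
    finally show ?thesis .
  qed
  have "{..<n} \<inter> {j. i = j} = {i}"
    using \<open>i < n\<close> by auto
  then have "(\<Sum>j<n. N i j * x j) = l * x i - (\<Sum>j<n. M i j * x j)"
    by (simp add: N_def left_diff_distrib sum_subtractf mult.assoc flip: sum_distrib_left)
  moreover have "(\<Sum>j<n. N i j * x j) = 0"
    using \<open>i < n\<close> bound assms(3,4)
    by (intro psd_quad_form_zero_imp_kernel[of n N]) (auto simp: N_def sym quad_N)
  ultimately show ?thesis
    by simp
qed

lemma rayleigh_max_eigenpair:
  assumes "n > 0" and sym: "\<And>i j. i < n \<Longrightarrow> j < n \<Longrightarrow> M i j = M j i"
  shows "\<exists>x l. sum_squares n x = 1 \<and> quad_form n M x = l
    \<and> (\<forall>y. quad_form n M y \<le> l * sum_squares n y)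
    \<and> (\<forall>i<n. (\<Sum>j<n. M i j * x j) = l * x i)"
proof -
  obtain x where x: "sum_squares n x = 1"
    and x_max: "\<And>y. sum_squares n y = 1 \<Longrightarrow> quad_form n M y \<le> quad_form n M x"
    using quad_form_attains_max_on_sphere[OF \<open>n > 0\<close>] by blast
  have bound: "quad_form n M y \<le> quad_form n M x * sum_squares n y" for y
    using x_max by (rule quad_form_le_of_sphere_bound)
  show ?thesis
    using rayleigh_maximizer_eigenvector[OF sym bound x refl] x bound by blast
qed

lemma quad_form_eigenvector:
  assumes "\<And>i. i < n \<Longrightarrow> (\<Sum>j<n. M i j * y j) = k * y i"
  shows "quad_form n M y = k * sum_squares n y"
proof -
  have "quad_form n M y = (\<Sum>i<n. y i * (\<Sum>j<n. M i j * y j))"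
    by (simp add: quad_form_def sum_distrib_left mult_ac)
  also have "\<dots> = k * sum_squares n y"
    using assms by (simp add: sum_squares_def sum_distrib_left power2_eq_square mult_ac)
  finally show ?thesis .
qed

lemma finite_eigenvalues:
  fixes M :: "'a :: field mat"
  assumes "M \<in> carrier_mat n n"
  shows "finite {k. eigenvalue M k}"
proof -
  have "char_poly M \<noteq> 0"
    using degree_monic_char_poly[OF assms] by auto
  then show ?thesis
    using poly_roots_finite eigenvalue_root_char_poly[OF assms] by simp
qed

lemma mult_mat_vec_index_sum:
  assumes "M \<in> carrier_mat n n" and "v \<in> carrier_vec n" and "i < n"
  shows "(M *\<^sub>v v) $ i = (\<Sum>j<n. M $$ (i, j) * v $ j)"
  using assms by (simp add: scalar_prod_def atLeast0LessThan mult_ac)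

lemma max_eigenvalue_symmetric_mat:
  fixes M :: "real mat"
  assumes M: "M \<in> carrier_mat n n" and sym: "M\<^sup>T = M" and "n > 0"
  defines "Mf \<equiv> \<lambda>i j. M $$ (i, j)"
  obtains x where "sum_squares n x = 1" and "quad_form n Mf x = Max {k. eigenvalue M k}"
    and "\<And>y. quad_form n Mf y \<le> Max {k. eigenvalue M k} * sum_squares n y"
proof -
  have Mf_sym: "Mf i j = Mf j i" if "i < n" "j < n" for i j
  proof -
    have "M $$ (i, j) = M\<^sup>T $$ (i, j)"
      by (simp only: sym)
    then show ?thesis
      using M that by (simp add: Mf_def)
  qed
  have "\<exists>x l. sum_squares n x = 1 \<and> quad_form n Mf x = l
    \<and> (\<forall>y. quad_form n Mf y \<le> l * sum_squares n y)
    \<and> (\<forall>i<n. (\<Sum>j<n. Mf i j * x j) = l * x i)"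
    by (intro rayleigh_max_eigenpair \<open>n > 0\<close> Mf_sym)
  then obtain x l where x: "sum_squares n x = 1" and quad_x: "quad_form n Mf x = l"
    and bound: "\<And>y. quad_form n Mf y \<le> l * sum_squares n y"
    and eigen: "\<And>i. i < n \<Longrightarrow> (\<Sum>j<n. Mf i j * x j) = l * x i"
    by blast
  have "eigenvalue M l"
    unfolding eigenvalue_def eigenvector_def
  proof (intro exI conjI)
    show "vec n x \<in> carrier_vec (dim_row M)"
      using M by simp
    show "vec n x \<noteq> 0\<^sub>v (dim_row M)"
      using x sum_squares_eq_0_iff[of n x] M by (auto simp: vec_eq_iff)
    show "M *\<^sub>v vec n x = l \<cdot>\<^sub>v vec n x"
    proof (rule eq_vecI)
      fix i assume "i < dim_vec (l \<cdot>\<^sub>v vec n x)"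
      then have "i < n"
        by simp
      then show "(M *\<^sub>v vec n x) $ i = (l \<cdot>\<^sub>v vec n x) $ i"
        using eigen[of i] by (subst mult_mat_vec_index_sum[OF M]) (auto simp: Mf_def)
    qed (use M in simp)
  qed
  moreover have "k \<le> l" if k: "eigenvalue M k" for k
  proof -
    obtain v where v: "v \<in> carrier_vec n" "v \<noteq> 0\<^sub>v n" "M *\<^sub>v v = k \<cdot>\<^sub>v v"
      using k M unfolding eigenvalue_def eigenvector_def by auto
    have "(\<Sum>j<n. Mf i j * v $ j) = k * v $ i" if "i < n" for i
    proof -
      have "(\<Sum>j<n. Mf i j * v $ j) = (M *\<^sub>v v) $ i"
        by (subst mult_mat_vec_index_sum[OF M v(1) that]) (simp add: Mf_def)
      also have "\<dots> = k * v $ i"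
        using v(1,3) that by simp
      finally show ?thesis .
    qed
    then have "quad_form n Mf (\<lambda>i. v $ i) = k * sum_squares n (\<lambda>i. v $ i)"
      by (rule quad_form_eigenvector)
    moreover have "sum_squares n (\<lambda>i. v $ i) > 0"
      using v(1,2) sum_squares_eq_0_iff[of n "\<lambda>i. v $ i"] sum_squares_nonneg[of n "\<lambda>i. v $ i"]
      by (auto simp: vec_eq_iff)
    ultimately show ?thesis
      using bound[of "\<lambda>i. v $ i"] by simp
  qed
  ultimately have "Max {k. eigenvalue M k} = l"
    using finite_eigenvalues[OF M] by (intro Max_eqI) auto
  then show ?thesis
    using that x quad_x bound by blast
qed

section \<open>The largest singular value and the row and column sums\<close>

definition transpose_mult_vec :: "real mat \<Rightarrow> (nat \<Rightarrow> real) \<Rightarrow> nat \<Rightarrow> real" where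
  "transpose_mult_vec B y k = (\<Sum>i<dim_row B. B $$ (i, k) * y i)"

lemma quad_form_gram:
  assumes "B \<in> carrier_mat n m"
  shows "quad_form n (\<lambda>i j. (B * B\<^sup>T) $$ (i, j)) y = sum_squares m (transpose_mult_vec B y)"
proof -
  have "quad_form n (\<lambda>i j. (B * B\<^sup>T) $$ (i, j)) y
      = (\<Sum>i<n. \<Sum>j<n. \<Sum>k<m. (B $$ (i, k) * y i) * (B $$ (j, k) * y j))"
    unfolding quad_form_def using assms
    by (intro sum.cong refl) (simp add: scalar_prod_def atLeast0LessThan sum_distrib_left sum_distrib_right mult_ac)
  also have "\<dots> = (\<Sum>i<n. \<Sum>k<m. \<Sum>j<n. (B $$ (i, k) * y i) * (B $$ (j, k) * y j))"
    by (intro sum.cong refl sum.swap)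
  also have "\<dots> = (\<Sum>k<m. \<Sum>i<n. \<Sum>j<n. (B $$ (i, k) * y i) * (B $$ (j, k) * y j))"
    by (rule sum.swap)
  also have "\<dots> = sum_squares m (transpose_mult_vec B y)"
    using assms by (simp add: sum_squares_def transpose_mult_vec_def power2_eq_square sum_product)
  finally show ?thesis .
qed

lemma largest_singular_value_rayleigh:
  assumes B: "B \<in> carrier_mat n m" and "n > 0"
  obtains l x where "largest_singular_value B = sqrt l" and "sum_squares n x = 1"
    and "sum_squares m (transpose_mult_vec B x) = l"
    and "\<And>y. sum_squares m (transpose_mult_vec B y) \<le> l * sum_squares n y"
proof -
  have "B * B\<^sup>T \<in> carrier_mat n n" and "(B * B\<^sup>T)\<^sup>T = B * B\<^sup>T"
    using B by (auto simp: transpose_mult)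
  then obtain x where "sum_squares n x = 1"
    and "quad_form n (\<lambda>i j. (B * B\<^sup>T) $$ (i, j)) x = Max {k. eigenvalue (B * B\<^sup>T) k}"
    and "\<And>y. quad_form n (\<lambda>i j. (B * B\<^sup>T) $$ (i, j)) y \<le> Max {k. eigenvalue (B * B\<^sup>T) k} * sum_squares n y"
    using max_eigenvalue_symmetric_mat \<open>n > 0\<close> by blast
  then show ?thesis
    using that[of "Max {k. eigenvalue (B * B\<^sup>T) k}" x] quad_form_gram[OF B]
    by (simp add: largest_singular_value_def)
qed

lemma weighted_sum_squared_le:
  fixes w x :: "'a \<Rightarrow> real"
  assumes "\<And>i. i \<in> A \<Longrightarrow> w i \<ge> 0"
  shows "(\<Sum>i\<in>A. w i * x i)\<^sup>2 \<le> (\<Sum>i\<in>A. w i) * (\<Sum>i\<in>A. w i * (x i)\<^sup>2)"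
proof -
  have "(\<Sum>i\<in>A. w i * x i) = (\<Sum>i\<in>A. sqrt (w i) * (sqrt (w i) * x i))"
    using assms by (intro sum.cong) (simp_all add: mult.assoc[symmetric])
  then have "(\<Sum>i\<in>A. w i * x i)\<^sup>2 \<le> (\<Sum>i\<in>A. (sqrt (w i))\<^sup>2) * (\<Sum>i\<in>A. (sqrt (w i) * x i)\<^sup>2)"
    by (simp only: Cauchy_Schwarz_ineq_sum)
  also have "\<dots> = (\<Sum>i\<in>A. w i) * (\<Sum>i\<in>A. w i * (x i)\<^sup>2)"
    using assms by (simp add: power_mult_distrib)
  finally show ?thesis .
qed

lemma sum_squared_ge_imp_eq_mean:
  fixes x :: "'a \<Rightarrow> real"
  assumes "finite A" and "A \<noteq> {}" and "card A * (\<Sum>i\<in>A. (x i)\<^sup>2) \<le> (\<Sum>i\<in>A. x i)\<^sup>2"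
    and "i \<in> A"
  shows "x i = (\<Sum>i\<in>A. x i) / card A"
proof -
  define N where "N = real (card A)"
  define m where "m = (\<Sum>i\<in>A. x i) / N"
  have "N > 0"
    using assms(1,2) by (simp add: N_def card_gt_0_iff)
  have "(\<Sum>i\<in>A. (x i - m)\<^sup>2) = (\<Sum>i\<in>A. (x i)\<^sup>2 - 2 * m * x i + m\<^sup>2)"
    by (intro sum.cong) (simp_all add: power2_diff)
  also have "\<dots> = (\<Sum>i\<in>A. (x i)\<^sup>2) - 2 * m * (\<Sum>i\<in>A. x i) + N * m\<^sup>2"
    by (simp add: sum.distrib sum_subtractf N_def flip: sum_distrib_left)
  also have "\<dots> = (\<Sum>i\<in>A. (x i)\<^sup>2) - (\<Sum>i\<in>A. x i)\<^sup>2 / N"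
    using \<open>N > 0\<close> by (simp add: m_def power2_eq_square field_simps)
  also have "\<dots> \<le> 0"
    using assms(3) \<open>N > 0\<close> by (simp add: N_def pos_le_divide_eq mult.commute)
  moreover have "(\<Sum>i\<in>A. (x i - m)\<^sup>2) \<ge> 0"
    by (simp add: sum_nonneg)
  ultimately have "(\<Sum>i\<in>A. (x i - m)\<^sup>2) = 0"
    by linarith
  then have "(x i - m)\<^sup>2 = 0"
    using assms(1,4) by (simp add: sum_nonneg_eq_0_iff)
  then show ?thesis
    by (simp add: m_def N_def)
qed

definition row_sum :: "real mat \<Rightarrow> nat \<Rightarrow> real" where
  "row_sum B i = (\<Sum>j<dim_col B. B $$ (i, j))"

definition col_sum :: "real mat \<Rightarrow> nat \<Rightarrow> real" where
  "col_sum B j = (\<Sum>i<dim_row B. B $$ (i, j))"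

lemma transpose_mult_vec_one: "transpose_mult_vec B (\<lambda>_. 1) = col_sum B"
  by (simp add: fun_eq_iff transpose_mult_vec_def col_sum_def)

lemma sum_transpose_mult_vec:
  assumes "B \<in> carrier_mat n m"
  shows "(\<Sum>k<m. transpose_mult_vec B y k) = (\<Sum>i<n. y i * row_sum B i)"
  using assms unfolding transpose_mult_vec_def row_sum_def
  by (subst sum.swap) (simp add: sum_distrib_left mult_ac)

lemma sum_col_sum_eq_sum_row_sum:
  assumes "B \<in> carrier_mat n m"
  shows "(\<Sum>k<m. col_sum B k) = (\<Sum>i<n. row_sum B i)"
  using sum_transpose_mult_vec[OF assms, of "\<lambda>_. 1"] by (simp add: transpose_mult_vec_one)

lemma mean_row_sum_le_largest_singular_value:
  assumes B: "B \<in> carrier_mat n n" and "n > 0"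
  shows "(\<Sum>i<n. row_sum B i) / n \<le> largest_singular_value B"
proof -
  define c where "c = (\<Sum>i<n. row_sum B i) / n"
  obtain l where sv: "largest_singular_value B = sqrt l"
    and bound: "\<And>y. sum_squares n (transpose_mult_vec B y) \<le> l * sum_squares n y"
    using largest_singular_value_rayleigh[OF B \<open>n > 0\<close>] by blast
  have "(n * c)\<^sup>2 = (\<Sum>k<n. col_sum B k)\<^sup>2"
    using \<open>n > 0\<close> by (simp add: c_def sum_col_sum_eq_sum_row_sum[OF B])
  also have "\<dots> \<le> n * sum_squares n (col_sum B)"
    using sum_squared_le_sum_of_squares[of "col_sum B" "{..<n}"] by (simp add: sum_squares_def mult.commute)
  also have "\<dots> \<le> n * (l * n)"
    using bound[of "\<lambda>_. 1"] by (intro mult_left_mono) (simp_all add: transpose_mult_vec_one sum_squares_def)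
  finally have "c\<^sup>2 \<le> l"
    using \<open>n > 0\<close> by (simp add: power_mult_distrib power2_eq_square)
  have "c \<le> sqrt (c\<^sup>2)"
    by simp
  also have "\<dots> \<le> sqrt l"
    using \<open>c\<^sup>2 \<le> l\<close> by (rule real_sqrt_le_mono)
  finally show ?thesis
    by (simp add: sv c_def)
qed

lemma largest_singular_value_eq_mean_imp_regular:
  assumes B: "B \<in> carrier_mat n n" and "n > 0"
    and sv_eq: "largest_singular_value B = (\<Sum>i<n. row_sum B i) / n" and "i < n"
  shows "row_sum B i = (\<Sum>i<n. row_sum B i) / n" and "col_sum B i = (\<Sum>i<n. row_sum B i) / n"
proof -
  define c where "c = (\<Sum>i<n. row_sum B i) / n"
  obtain l x where sv: "largest_singular_value B = sqrt l"
    and l: "sum_squares n (transpose_mult_vec B x) = l"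
    and bound: "\<And>y. sum_squares n (transpose_mult_vec B y) \<le> l * sum_squares n y"
    using largest_singular_value_rayleigh[OF B \<open>n > 0\<close>] by blast
  have "l \<ge> 0"
    unfolding l[symmetric] by (rule sum_squares_nonneg)
  then have "l = (sqrt l)\<^sup>2"
    by simp
  also have "sqrt l = c"
    using sv_eq sv by (simp add: c_def)
  finally have "l = c\<^sup>2" .
  have sum_row: "(\<Sum>i<n. row_sum B i) = n * c"
    using \<open>n > 0\<close> by (simp add: c_def)
  have "n * sum_squares n (col_sum B) \<le> n * (l * n)"
    using bound[of "\<lambda>_. 1"] by (intro mult_left_mono) (simp_all add: transpose_mult_vec_one sum_squares_def)
  also have "\<dots> = (\<Sum>k<n. col_sum B k)\<^sup>2"
    using \<open>l = c\<^sup>2\<close> sum_row by (simp add: sum_col_sum_eq_sum_row_sum[OF B] power2_eq_square)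
  finally have "col_sum B i = (\<Sum>k<n. col_sum B k) / n"
    using sum_squared_ge_imp_eq_mean[of "{..<n}" "col_sum B" i] \<open>i < n\<close> by (simp add: sum_squares_def lessThan_empty_iff)
  then show "col_sum B i = c"
    by (simp add: sum_col_sum_eq_sum_row_sum[OF B] c_def)
  \<comment> \<open>The entries of \<open>B\<^sup>T r\<close> for the row-sum vector \<open>r\<close> add up to \<open>|r|\<^sup>2\<close>.\<close>
  have "n * sum_squares n (row_sum B) \<le> (\<Sum>k<n. row_sum B k)\<^sup>2"
  proof (cases "sum_squares n (row_sum B) = 0")
    case False
    have "(sum_squares n (row_sum B))\<^sup>2 = (\<Sum>k<n. transpose_mult_vec B (row_sum B) k)\<^sup>2"
      by (simp add: sum_transpose_mult_vec[OF B] sum_squares_def power2_eq_square)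
    also have "\<dots> \<le> n * sum_squares n (transpose_mult_vec B (row_sum B))"
      using sum_squared_le_sum_of_squares[of _ "{..<n}"] by (simp add: sum_squares_def mult.commute)
    also have "\<dots> \<le> n * (l * sum_squares n (row_sum B))"
      using bound by (intro mult_left_mono) simp_all
    finally have "sum_squares n (row_sum B) \<le> n * l"
      using False sum_squares_nonneg[of n "row_sum B"] by (simp add: power2_eq_square mult_ac)
    then show ?thesis
      using \<open>n > 0\<close> \<open>l = c\<^sup>2\<close> sum_row by (simp add: power2_eq_square mult_ac)
  qed simp
  then have "row_sum B i = (\<Sum>k<n. row_sum B k) / n"
    using sum_squared_ge_imp_eq_mean[of "{..<n}" "row_sum B" i] \<open>i < n\<close> by (simp add: sum_squares_def lessThan_empty_iff)
  then show "row_sum B i = c"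
    by (simp add: c_def)
qed

lemma largest_singular_value_le_of_regular:
  assumes B: "B \<in> carrier_mat n m" and "n > 0"
    and nonneg: "\<And>i j. i < n \<Longrightarrow> j < m \<Longrightarrow> B $$ (i, j) \<ge> 0"
    and rows: "\<And>i. i < n \<Longrightarrow> row_sum B i = c" and cols: "\<And>j. j < m \<Longrightarrow> col_sum B j = c"
  shows "largest_singular_value B \<le> c"
proof -
  obtain l x where sv: "largest_singular_value B = sqrt l" and x: "sum_squares n x = 1"
    and l: "sum_squares m (transpose_mult_vec B x) = l"
    using largest_singular_value_rayleigh[OF B \<open>n > 0\<close>] by blast
  have "l \<le> (\<Sum>k<m. col_sum B k * transpose_mult_vec B (\<lambda>i. (x i)\<^sup>2) k)"
    unfolding l[symmetric] sum_squares_def transpose_mult_vec_def col_sum_def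
    using B nonneg by (intro sum_mono weighted_sum_squared_le) auto
  also have "\<dots> = c * (\<Sum>k<m. transpose_mult_vec B (\<lambda>i. (x i)\<^sup>2) k)"
    using cols by (simp add: sum_distrib_left)
  also have "\<dots> = c * (\<Sum>i<n. (x i)\<^sup>2 * row_sum B i)"
    by (simp add: sum_transpose_mult_vec[OF B])
  also have "\<dots> = c\<^sup>2"
    using rows x by (simp add: sum_squares_def power2_eq_square flip: sum_distrib_right)
  finally have "l \<le> c\<^sup>2" .
  have "row_sum B 0 \<ge> 0"
    using B nonneg \<open>n > 0\<close> unfolding row_sum_def by (intro sum_nonneg) auto
  then have "c \<ge> 0"
    using rows[OF \<open>n > 0\<close>] by simp
  have "sqrt l \<le> sqrt (c\<^sup>2)"
    using \<open>l \<le> c\<^sup>2\<close> by (rule real_sqrt_le_mono)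
  then show ?thesis
    using sv \<open>c \<ge> 0\<close> by simp
qed

lemma largest_singular_value_eq_mean_row_sum_iff:
  assumes B: "B \<in> carrier_mat n n" and "n > 0"
    and nonneg: "\<And>i j. i < n \<Longrightarrow> j < n \<Longrightarrow> B $$ (i, j) \<ge> 0"
  defines "c \<equiv> (\<Sum>i<n. row_sum B i) / n"
  shows "largest_singular_value B = c \<longleftrightarrow> (\<forall>i<n. row_sum B i = c \<and> col_sum B i = c)"
proof
  assume "largest_singular_value B = c"
  then show "\<forall>i<n. row_sum B i = c \<and> col_sum B i = c"
    using largest_singular_value_eq_mean_imp_regular[OF B \<open>n > 0\<close>, folded c_def] by blast
next
  assume regular: "\<forall>i<n. row_sum B i = c \<and> col_sum B i = c"
  have "largest_singular_value B \<le> c"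
    by (rule largest_singular_value_le_of_regular[OF B \<open>n > 0\<close> nonneg]) (simp_all add: regular)
  moreover have "c \<le> largest_singular_value B"
    unfolding c_def by (rule mean_row_sum_le_largest_singular_value[OF B \<open>n > 0\<close>])
  ultimately show "largest_singular_value B = c"
    by simp
qed

section \<open>The matrix \<open>A\<^sub>\<alpha>\<close> of a digraph\<close>

lemma A_alpha_carrier: "A_alpha \<alpha> n Arcs \<in> carrier_mat n n"
  by (simp add: A_alpha_def outdeg_mat_def adj_mat_def)

lemma A_alpha_index:
  assumes "i < n" and "j < n"
  shows "A_alpha \<alpha> n Arcs $$ (i, j)
    = \<alpha> * of_bool (i = j) * outdeg Arcs i + (1 - \<alpha>) * of_bool ((i, j) \<in> Arcs)"
  using assms by (simp add: A_alpha_def outdeg_mat_def adj_mat_def)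

lemma A_alpha_nonneg:
  assumes "0 \<le> \<alpha>" and "\<alpha> \<le> 1" and "i < n" and "j < n"
  shows "A_alpha \<alpha> n Arcs $$ (i, j) \<ge> 0"
  using assms by (simp add: A_alpha_index)

lemma digraph_arcs_subset: "digraph n Arcs \<Longrightarrow> Arcs \<subseteq> {..<n} \<times> {..<n}"
  by (auto simp: digraph_def)

lemma outdeg_eq_count:
  assumes "digraph n Arcs"
  shows "(\<Sum>j<n. of_bool ((i, j) \<in> Arcs)) = real (outdeg Arcs i)"
proof -
  have "{..<n} \<inter> {j. (i, j) \<in> Arcs} = {j. (i, j) \<in> Arcs}"
    using digraph_arcs_subset[OF assms] by blast
  then show ?thesis
    by (simp add: outdeg_def)
qed

lemma indeg_eq_count:
  assumes "digraph n Arcs"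
  shows "(\<Sum>i<n. of_bool ((i, j) \<in> Arcs)) = real (indeg Arcs j)"
proof -
  have "{..<n} \<inter> {i. (i, j) \<in> Arcs} = {i. (i, j) \<in> Arcs}"
    using digraph_arcs_subset[OF assms] by blast
  then show ?thesis
    by (simp add: indeg_def)
qed

lemma row_sum_A_alpha:
  assumes "digraph n Arcs" and "i < n"
  shows "row_sum (A_alpha \<alpha> n Arcs) i = outdeg Arcs i"
proof -
  have "row_sum (A_alpha \<alpha> n Arcs) i
      = \<alpha> * outdeg Arcs i + (1 - \<alpha>) * (\<Sum>j<n. of_bool ((i, j) \<in> Arcs))"
    using assms(2) A_alpha_carrier[of \<alpha> n Arcs]
    by (simp add: row_sum_def A_alpha_index sum.distrib mult.assoc flip: sum_distrib_left)
  then show ?thesis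
    using outdeg_eq_count[OF assms(1)] by (simp add: algebra_simps)
qed

lemma col_sum_A_alpha:
  assumes "digraph n Arcs" and "j < n"
  shows "col_sum (A_alpha \<alpha> n Arcs) j = \<alpha> * outdeg Arcs j + (1 - \<alpha>) * indeg Arcs j"
proof -
  have "col_sum (A_alpha \<alpha> n Arcs) j
      = \<alpha> * outdeg Arcs j + (1 - \<alpha>) * (\<Sum>i<n. of_bool ((i, j) \<in> Arcs))"
    using assms(2) A_alpha_carrier[of \<alpha> n Arcs]
    by (simp add: col_sum_def A_alpha_index sum.distrib mult.assoc flip: sum_distrib_left)
  then show ?thesis
    using indeg_eq_count[OF assms(1)] by simp
qed

lemma sum_outdeg_eq_card:
  assumes "digraph n Arcs"
  shows "(\<Sum>i<n. outdeg Arcs i) = card Arcs"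
proof -
  have "finite {j. (i, j) \<in> Arcs}" for i
  proof (rule finite_subset)
    show "{j. (i, j) \<in> Arcs} \<subseteq> {..<n}"
      using digraph_arcs_subset[OF assms] by blast
  qed simp
  have "Arcs = (SIGMA i:{..<n}. {j. (i, j) \<in> Arcs})"
    using digraph_arcs_subset[OF assms] by blast
  then have "card Arcs = card (SIGMA i:{..<n}. {j. (i, j) \<in> Arcs})"
    by (rule arg_cong)
  also have "\<dots> = (\<Sum>i<n. card {j. (i, j) \<in> Arcs})"
    using \<open>\<And>i. finite {j. (i, j) \<in> Arcs}\<close> by (intro card_SigmaI) auto
  finally show ?thesis
    by (simp add: outdeg_def)
qed

lemma sum_row_sum_A_alpha:
  assumes "digraph n Arcs"
  shows "(\<Sum>i<n. row_sum (A_alpha \<alpha> n Arcs) i) = card Arcs"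
proof -
  have "(\<Sum>i<n. row_sum (A_alpha \<alpha> n Arcs) i) = (\<Sum>i<n. real (outdeg Arcs i))"
    by (intro sum.cong) (simp_all add: row_sum_A_alpha[OF assms])
  then show ?thesis
    by (simp add: sum_outdeg_eq_card[OF assms] flip: of_nat_sum)
qed

lemma A_alpha_regular_iff:
  fixes c :: real
  assumes "digraph n Arcs" and "\<alpha> < 1" and "v < n"
  shows "row_sum (A_alpha \<alpha> n Arcs) v = c \<and> col_sum (A_alpha \<alpha> n Arcs) v = c
    \<longleftrightarrow> outdeg Arcs v = c \<and> indeg Arcs v = c"
proof -
  have convex_eq_iff: "\<alpha> * c + (1 - \<alpha>) * d = c \<longleftrightarrow> d = c" for d :: real
  proof -
    have "\<alpha> * c + (1 - \<alpha>) * d - c = (1 - \<alpha>) * (d - c)"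
      by (simp add: algebra_simps)
    then show ?thesis
      using \<open>\<alpha> < 1\<close> by auto
  qed
  show ?thesis
    using assms convex_eq_iff by (auto simp: row_sum_A_alpha col_sum_A_alpha)
qed

theorem lemma2p9:
  fixes n :: nat and Arcs :: "(nat \<times> nat) set" and \<alpha> :: real
  assumes "digraph n Arcs" and "n \<ge> 2" and "0 \<le> \<alpha>" and "\<alpha> < 1"
  shows "largest_singular_value (A_alpha \<alpha> n Arcs) \<ge> real (card Arcs) / real n
    \<and> (largest_singular_value (A_alpha \<alpha> n Arcs) = real (card Arcs) / real n \<longleftrightarrow>
        (\<forall>v<n. real (outdeg Arcs v) = real (card Arcs) / real n
              \<and> real (indeg Arcs v) = real (card Arcs) / real n))"
proof -
  define A where "A = A_alpha \<alpha> n Arcs"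
  define c where "c = real (card Arcs) / real n"
  have "n > 0"
    using assms(2) by simp
  have A: "A \<in> carrier_mat n n"
    by (simp add: A_def A_alpha_carrier)
  have nonneg: "A $$ (i, j) \<ge> 0" if "i < n" "j < n" for i j
    using assms(3,4) that by (simp add: A_def A_alpha_nonneg)
  have mean: "(\<Sum>i<n. row_sum A i) / n = c"
    by (simp add: A_def c_def sum_row_sum_A_alpha[OF assms(1)])
  have regular_iff: "row_sum A v = c \<and> col_sum A v = c \<longleftrightarrow> outdeg Arcs v = c \<and> indeg Arcs v = c"
    if "v < n" for v
    using A_alpha_regular_iff[OF assms(1,4) that] by (simp add: A_def)
  have "c \<le> largest_singular_value A"
    using mean_row_sum_le_largest_singular_value[OF A \<open>n > 0\<close>] by (simp only: mean)
  moreover have "largest_singular_value A = c \<longleftrightarrow> (\<forall>v<n. outdeg Arcs v = c \<and> indeg Arcs v = c)"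
    using largest_singular_value_eq_mean_row_sum_iff[OF A \<open>n > 0\<close> nonneg] regular_iff
    by (simp only: mean) blast
  ultimately show ?thesis
    by (simp add: A_def c_def)
qed

end
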